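(* Let $d\in\{2,3\}$ and let $K\subset M^{m\times n}$ be a $d$-dimensional subspace without Rank-$1$ connections, with $K=P_K(\mathbb{R}^d)$ where $P_K(z)=(a_{ij}\cdot z)_{ij}$, $a_{ij}\in\mathbb{R}^d$, is a linear isomorphism onto $K$. If $\dim\mathrm{Span}\{a_{i_0l}:l=1,\dots,n\}=2$ for some $i_0$, or $\dim\mathrm{Span}\{a_{lj_0}:l=1,\dots,m\}=2$ for some $j_0$, then there exists $\beta\in\mathbb{R}^{q_0}\setminus\{0\}$ with $\sum_{k=1}^{q_0}\beta_kM_k(X)\ge0$ for all $X\in K$ and $\sum_k\beta_kM_k\not\equiv0$ on $K$, where $M_1,\dots,M_{q_0}$ are all the $2\times2$ minors of $m\times n$ matrices.
   Context: A set has Rank-$1$ connections if it contains $A\ne B$ with $\mathrm{Rank}(A-B)=1$. *)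

theory Defs
  imports "HOL-Analysis.Analysis"
begin

definition has_rank1_connections :: "(real^'n^'m) set \<Rightarrow> bool" where
  "has_rank1_connections K \<longleftrightarrow> (\<exists>A\<in>K. \<exists>B\<in>K. A \<noteq> B \<and> rank (A - B) = 1)"

definition minor_idx :: "('m::{finite,linorder} \<times> 'm \<times> 'n::{finite,linorder} \<times> 'n) set" where
  "minor_idx = {(i1, i2, j1, j2). i1 < i2 \<and> j1 < j2}"

definition minor2 :: "real^'n^'m \<Rightarrow> ('m \<times> 'm \<times> 'n \<times> 'n) \<Rightarrow> real" where
  "minor2 X q = (case q of (i1, i2, j1, j2) \<Rightarrow>
      X $ i1 $ j1 * X $ i2 $ j2 - X $ i1 $ j2 * X $ i2 $ j1)"

definition PK :: "('m \<Rightarrow> 'n \<Rightarrow> real^'d) \<Rightarrow> real^'d \<Rightarrow> real^'n^'m" where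
  "PK a z = (\<chi> i j. a i j \<bullet> z)"

end

theory Submission
  imports Defs "HOL-Real_Asymp.Real_Asymp"
begin

(* If no combination of the 2x2 minors is nonnegative and nontrivial on K, the span of the
   symmetric matrices of the quadratic forms z |-> minor (P_K z) misses the compact convex hull
   of the unit rank-one matrices v v^T. A separating hyperplane yields a positive definite form
   M with a_ij . M a_i'j' = a_ij' . M a_i'j for all indices. In an M-orthonormal frame whose
   first two vectors span the two-dimensional row {a_i0l} (or column), these Gram identities
   express every row through that one, and a root of a real cubic then gives a direction y for
   which (a_ij . M y) is a nonzero matrix of rank one in K: a rank-one connection with 0. *)

section \<open>Rank-one combinations of coordinate matrices\<close>

definition rows_proportional :: "('r \<Rightarrow> 'c \<Rightarrow> real) \<Rightarrow> bool" where
  "rows_proportional X \<longleftrightarrow> (\<exists>r. \<forall>i. \<exists>c. \<forall>j. X i j = c * r j)"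

lemma rank_le_1_if_rows_proportional:
  fixes X :: "real^'n^'m"
  assumes "rows_proportional (\<lambda>i j. X $ i $ j)"
  shows "rank X \<le> 1"
proof -
  obtain r where r: "\<forall>i. \<exists>c. \<forall>j. X $ i $ j = c * r j"
    using assms by (auto simp: rows_proportional_def)
  have "rows X \<subseteq> span {\<chi> j. r j}"
  proof
    fix x assume "x \<in> rows X"
    then obtain i where x: "x = X $ i" by (auto simp: rows_def row_def)
    obtain c where "\<forall>j. X $ i $ j = c * r j" using r by blast
    then have "x = c *\<^sub>R (\<chi> j. r j)" by (simp add: x vec_eq_iff)
    then show "x \<in> span {\<chi> j. r j}" by (simp add: span_base span_mul)
  qed
  then have "dim (rows X) \<le> card {\<chi> j. r j}" by (intro dim_le_card) auto
  then show ?thesis by (simp add: row_rank_def)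
qed

lemma cubic_has_real_root:
  fixes c3 c2 c1 c0 :: real
  assumes "c3 \<noteq> 0"
  shows "\<exists>t. c3 * t^3 + c2 * t^2 + c1 * t + c0 = 0"
proof -
  define f where "f t = t^3 + (c2/c3) * t^2 + (c1/c3) * t + c0/c3" for t
  have "filterlim f at_top at_top" "filterlim f at_bot at_bot"
    unfolding f_def by real_asymp+
  then have "eventually (\<lambda>t. f t \<ge> 0) at_top" "eventually (\<lambda>t. f t \<le> 0) at_bot"
    by (auto simp: filterlim_at_top filterlim_at_bot)
  then obtain t1 t2 where "\<forall>t\<ge>t1. f t \<ge> 0" "\<forall>t\<le>t2. f t \<le> 0"
    by (auto simp: eventually_at_top_linorder eventually_at_bot_linorder)
  then have "f (min t1 t2) \<le> 0" "f (max t1 t2) \<ge> 0" by auto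
  moreover have "continuous_on UNIV f" unfolding f_def by (intro continuous_intros)
  ultimately obtain t where "f t = 0"
    using IVT'[of f "min t1 t2" 0 "max t1 t2"]
    by (metis continuous_on_subset max.cobounded1 min.cobounded1 order.trans subset_UNIV)
  then show ?thesis
    using assms by (intro exI[of _ t]) (auto simp: f_def field_simps)
qed

lemma in_row_span_if_equal_minors:
  fixes p q y h :: "'r \<Rightarrow> real"
  assumes minors: "\<And>i i'. p i * q i' - q i * p i' = y i * h i' - h i * y i'"
    and nz: "y k * h k' - h k * y k' \<noteq> 0"
  shows "\<exists>\<alpha> \<beta>. \<forall>i. y i = \<alpha> * p i + \<beta> * q i"
proof -
  define \<delta> where "\<delta> = y k * h k' - h k * y k'"
  define cp where "cp = y k * q k' - y k' * q k"
  define cq where "cq = p k * y k' - p k' * y k"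
  have "\<delta> * y i = cp * p i + cq * q i" for i
    using minors[of k' i] minors[of k i] unfolding \<delta>_def cp_def cq_def by algebra
  moreover have "\<delta> \<noteq> 0" using nz by (simp add: \<delta>_def)
  ultimately have "y i = cp / \<delta> * p i + cq / \<delta> * q i" for i
    by (simp add: field_simps)
  then show ?thesis by blast
qed

(* The form y i * (s^2 - t^2) + h i * t * s + u * (s * p i - t * q i) below is the determinant
   of S_i (t, s) + u (p i, q i) and (t, s), where S_i is the symmetric 2x2 matrix with
   off-diagonal entry y i and difference h i of its diagonal entries. *)

lemma common_zero_if_proportional:
  fixes y h :: "'r \<Rightarrow> real"
  assumes "\<And>i i'. y i * h i' = h i * y i'"
  shows "\<exists>t s. (t \<noteq> 0 \<or> s \<noteq> 0) \<and> (\<forall>i. y i * (s\<^sup>2 - t\<^sup>2) + h i * t * s = 0)"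
proof (cases "\<forall>i. y i = 0")
  case True
  then show ?thesis by (intro exI[of _ 1] exI[of _ 0]) simp
next
  case False
  then obtain k where yk: "y k \<noteq> 0" by blast
  define z where "z = h k / y k"
  have hz: "h i = z * y i" for i
    using assms[of k i] yk by (simp add: z_def field_simps)
  define t where "t = (z + sqrt (z\<^sup>2 + 4)) / 2"
  have "(sqrt (z\<^sup>2 + 4))\<^sup>2 = z\<^sup>2 + 4" by simp
  then have "1 - t\<^sup>2 + z * t = 0"
    unfolding t_def by (simp add: power2_eq_square field_simps)
  moreover have "y i * (1\<^sup>2 - t\<^sup>2) + h i * t * 1 = y i * (1 - t\<^sup>2 + z * t)" for i
    by (simp add: hz algebra_simps)
  ultimately show ?thesis by (intro exI[of _ t] exI[of _ 1]) simp
qed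

lemma common_zero_if_in_span:
  fixes y h p q :: "'r \<Rightarrow> real"
  assumes y: "\<And>i. y i = aY * p i + bY * q i" and h: "\<And>i. h i = aH * p i + bH * q i"
  shows "\<exists>t s u. (t \<noteq> 0 \<or> s \<noteq> 0) \<and>
           (\<forall>i. y i * (s\<^sup>2 - t\<^sup>2) + h i * t * s + u * (s * p i - t * q i) = 0)"
proof (cases "aY = 0")
  case True
  then have "y i * (0\<^sup>2 - 1\<^sup>2) + h i * 1 * 0 + (- bY) * (0 * p i - 1 * q i) = 0" for i
    by (simp add: y)
  then show ?thesis by (intro exI[of _ 1] exI[of _ 0] exI[of _ "- bY"]) simp
next
  case False
  obtain t where t: "(- aY) * t^3 + (aH - bY) * t\<^sup>2 + (aY + bH) * t + bY = 0"
    using cubic_has_real_root[of "- aY" "aH - bY" "aY + bH" bY] False by auto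
  \<comment> \<open>this \<open>u\<close> cancels the \<open>p i\<close>-terms, leaving \<open>q i\<close> times the cubic\<close>
  define u where "u = - ((1 - t\<^sup>2) * aY + t * aH)"
  have "y i * (1\<^sup>2 - t\<^sup>2) + h i * t * 1 + u * (1 * p i - t * q i)
      = q i * ((- aY) * t^3 + (aH - bY) * t\<^sup>2 + (aY + bH) * t + bY)" for i
    by (simp add: y h u_def power2_eq_square power3_eq_cube algebra_simps)
  then show ?thesis using t by (intro exI[of _ t] exI[of _ 1] exI[of _ u]) simp
qed

lemma common_eigendirection:
  fixes x y w p q :: "'r \<Rightarrow> real"
  assumes minors: "\<And>i i'. p i * q i' - q i * p i' = y i * (x i' - w i') - (x i - w i) * y i'"
  shows "\<exists>t s u. (t \<noteq> 0 \<or> s \<noteq> 0) \<and>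
           (\<forall>i. (t * x i + s * y i + u * p i) * s = (t * y i + s * w i + u * q i) * t)"
proof -
  define h where "h i = x i - w i" for i
  have "\<exists>t s u. (t \<noteq> 0 \<or> s \<noteq> 0) \<and>
           (\<forall>i. y i * (s\<^sup>2 - t\<^sup>2) + h i * t * s + u * (s * p i - t * q i) = 0)"
  proof (cases "\<forall>i i'. y i * h i' = h i * y i'")
    case True
    then obtain t s where "t \<noteq> 0 \<or> s \<noteq> 0" "\<forall>i. y i * (s\<^sup>2 - t\<^sup>2) + h i * t * s = 0"
      using common_zero_if_proportional[of y h] by blast
    then show ?thesis by (intro exI[of _ t] exI[of _ s] exI[of _ 0]) simp
  next
    case False
    then obtain k k' where nz: "y k * h k' - h k * y k' \<noteq> 0" by auto
    have mh: "p i * q i' - q i * p i' = y i * h i' - h i * y i'" for i i'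
      using minors by (simp add: h_def)
    have mh': "p i * q i' - q i * p i' = h i * (- y i') - (- y i) * h i'" for i i'
      using mh[of i i'] by (simp add: algebra_simps)
    obtain aY bY where "\<And>i. y i = aY * p i + bY * q i"
      using in_row_span_if_equal_minors[OF mh nz] by blast
    moreover have "h k * (- y k') - (- y k) * h k' \<noteq> 0"
      using nz by (auto simp: algebra_simps)
    then obtain aH bH where "\<And>i. h i = aH * p i + bH * q i"
      using in_row_span_if_equal_minors[of p q h "\<lambda>i. - y i" k k', OF mh'] by blast
    ultimately show ?thesis by (rule common_zero_if_in_span)
  qed
  then obtain t s u where ts: "t \<noteq> 0 \<or> s \<noteq> 0"
    and E: "\<And>i. y i * (s\<^sup>2 - t\<^sup>2) + h i * t * s + u * (s * p i - t * q i) = 0"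
    by blast
  have diff: "(t * x i + s * y i + u * p i) * s - (t * y i + s * w i + u * q i) * t
      = y i * (s\<^sup>2 - t\<^sup>2) + h i * t * s + u * (s * p i - t * q i)" for i
    by (simp add: h_def power2_eq_square algebra_simps)
  then have "(t * x i + s * y i + u * p i) * s = (t * y i + s * w i + u * q i) * t" for i
    using diff[of i] E[of i] right_minus_eq by metis
  then show ?thesis using ts by blast
qed

lemma symmetric_coefficients_if_exchange:
  fixes a b :: "'c \<Rightarrow> real" and f g :: "'r \<Rightarrow> 'c \<Rightarrow> real"
  assumes D: "a j1 * b j2 - a j2 * b j1 \<noteq> 0"
    and exch: "\<And>i j j'. a j * f i j' + b j * g i j' = a j' * f i j + b j' * g i j"
  shows "\<exists>x y w. \<forall>i j. f i j = x i * a j + y i * b j \<and> g i j = y i * a j + w i * b j"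
proof -
  define \<delta> where "\<delta> = a j1 * b j2 - a j2 * b j1"
  define nx where "nx i = b j2 * f i j1 - b j1 * f i j2" for i
  define ny where "ny i = b j2 * g i j1 - b j1 * g i j2" for i
  define nw where "nw i = a j1 * g i j2 - a j2 * g i j1" for i
  have "\<delta> * f i j = nx i * a j + ny i * b j" for i j
    using exch[of j i j1] exch[of j i j2] unfolding \<delta>_def nx_def ny_def by algebra
  moreover have "\<delta> * g i j = ny i * a j + nw i * b j" for i j
    using exch[of j i j1] exch[of j i j2] exch[of j1 i j2]
    unfolding \<delta>_def ny_def nw_def by algebra
  moreover have "\<delta> \<noteq> 0" using D by (simp add: \<delta>_def)
  ultimately have "f i j = nx i / \<delta> * a j + ny i / \<delta> * b j \<and>
      g i j = ny i / \<delta> * a j + nw i / \<delta> * b j" for i j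
    by (simp add: field_simps)
  then show ?thesis
    by (intro exI[of _ "\<lambda>i. nx i / \<delta>"] exI[of _ "\<lambda>i. ny i / \<delta>"] exI[of _ "\<lambda>i. nw i / \<delta>"]) simp
qed

lemma rows_proportional_or_in_span:
  fixes C :: "'r \<Rightarrow> 'c \<Rightarrow> real" and a b :: "'c \<Rightarrow> real"
  assumes D: "a j1 * b j2 - a j2 * b j1 \<noteq> 0"
    and minors: "\<And>i i' j j'. C i j * C i' j' - C i j' * C i' j = \<kappa> i i' * (a j * b j' - a j' * b j)"
  shows "((\<exists>i j. C i j \<noteq> 0) \<and> rows_proportional C) \<or>
         (\<exists>p q. (\<forall>i j. C i j = p i * a j + q i * b j) \<and> (\<forall>i i'. p i * q i' - q i * p i' = \<kappa> i i'))"
proof -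
  define \<delta> where "\<delta> = a j1 * b j2 - a j2 * b j1"
  have \<delta>: "\<delta> \<noteq> 0" using D by (simp add: \<delta>_def)
  define p where "p i = (b j2 * C i j1 - b j1 * C i j2) / \<delta>" for i
  define q where "q i = (a j1 * C i j2 - a j2 * C i j1) / \<delta>" for i
  \<comment> \<open>\<open>R\<close> is the part of \<open>C\<close> outside the row span of \<open>a\<close> and \<open>b\<close>\<close>
  define R where "R i j = C i j - p i * a j - q i * b j" for i j
  have \<delta>R: "\<delta> * R i j
      = \<delta> * C i j - (a j * b j2 - a j2 * b j) * C i j1 - (a j1 * b j - a j * b j1) * C i j2" for i j
  proof -
    have "\<delta> * p i = b j2 * C i j1 - b j1 * C i j2" "\<delta> * q i = a j1 * C i j2 - a j2 * C i j1"
      using \<delta> by (simp_all add: p_def q_def)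
    then show ?thesis unfolding R_def \<delta>_def by algebra
  qed
  have R_exchange: "R i j * C i' j' = R i' j * C i j'" for i i' j j'
  proof -
    have "\<delta> * (R i j * C i' j' - R i' j * C i j') =
       \<delta> * (C i j * C i' j' - C i j' * C i' j)
        - (a j * b j2 - a j2 * b j) * (C i j1 * C i' j' - C i j' * C i' j1)
        - (a j1 * b j - a j * b j1) * (C i j2 * C i' j' - C i j' * C i' j2)"
      using \<delta>R[of i j] \<delta>R[of i' j] by algebra
    also have "\<dots> = 0"
      unfolding minors \<delta>_def by algebra
    finally show ?thesis using \<delta> by simp
  qed
  show ?thesis
  proof (cases "\<exists>i j. R i j \<noteq> 0")
    case True
    then obtain i1 j0 where R: "R i1 j0 \<noteq> 0" by blast
    have "\<exists>j. C i1 j \<noteq> 0"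
    proof (rule ccontr)
      assume "\<not> (\<exists>j. C i1 j \<noteq> 0)"
      then have "R i1 j0 = 0" by (simp add: R_def p_def q_def)
      with R show False by simp
    qed
    moreover have "C i j = R i j0 / R i1 j0 * C i1 j" for i j
      using R_exchange[of i1 j0 i j] R by (simp add: field_simps)
    ultimately show ?thesis unfolding rows_proportional_def by blast
  next
    case False
    then have C: "C i j = p i * a j + q i * b j" for i j by (simp add: R_def algebra_simps)
    have "(p i * q i' - q i * p i') * \<delta> = \<kappa> i i' * \<delta>" for i i'
      using minors[of i j1 i' j2] unfolding C \<delta>_def by algebra
    then have "p i * q i' - q i * p i' = \<kappa> i i'" for i i' using \<delta> by simp
    with C show ?thesis by blast
  qed
qed

lemma parallel_if_cross_zero:
  fixes t s \<alpha> \<gamma> :: real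
  assumes "t \<noteq> 0 \<or> s \<noteq> 0" and "\<alpha> * s = \<gamma> * t"
  shows "\<exists>c. \<alpha> = c * t \<and> \<gamma> = c * s"
proof (cases "t = 0")
  case True
  then show ?thesis using assms by (intro exI[of _ "\<gamma> / s"]) simp
next
  case False
  then show ?thesis using assms(2) by (intro exI[of _ "\<alpha> / t"]) (simp add: field_simps)
qed

lemma rank_one_combination_if_equal_minors:
  fixes a b :: "'c \<Rightarrow> real" and x y w p q :: "'r \<Rightarrow> real"
  assumes D: "a j1 * b j2 - a j2 * b j1 \<noteq> 0"
    and minors: "\<And>i i'. p i * q i' - q i * p i' = y i * (x i' - w i') - (x i - w i) * y i'"
  shows "\<exists>t s u. (\<exists>j. t * a j + s * b j \<noteq> 0) \<and>
           (\<forall>i. \<exists>c. \<forall>j. (t * x i + s * y i + u * p i) * a j + (t * y i + s * w i + u * q i) * b j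
                         = c * (t * a j + s * b j))"
proof -
  obtain t s u where ts: "t \<noteq> 0 \<or> s \<noteq> 0"
    and eig: "\<forall>i. (t * x i + s * y i + u * p i) * s = (t * y i + s * w i + u * q i) * t"
    using common_eigendirection[where x = x and y = y and w = w and p = p and q = q, OF minors]
    by blast
  have "\<exists>j. t * a j + s * b j \<noteq> 0"
  proof (rule ccontr)
    assume "\<not> (\<exists>j. t * a j + s * b j \<noteq> 0)"
    then have "t * a j1 + s * b j1 = 0" "t * a j2 + s * b j2 = 0" by auto
    then have "t * (a j1 * b j2 - a j2 * b j1) = 0" "s * (a j1 * b j2 - a j2 * b j1) = 0"
      by algebra+
    then show False using D ts by simp
  qed
  moreover have "\<exists>c. \<forall>j. (t * x i + s * y i + u * p i) * a j + (t * y i + s * w i + u * q i) * b j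
                         = c * (t * a j + s * b j)" for i
  proof -
    obtain c where c: "t * x i + s * y i + u * p i = c * t" "t * y i + s * w i + u * q i = c * s"
      using parallel_if_cross_zero[OF ts eig[rule_format, of i]] by blast
    show ?thesis by (intro exI[of _ c] allI) (simp only: c, simp add: algebra_simps)
  qed
  ultimately show ?thesis by blast
qed

lemma rank_one_combination_if_gram_symmetric:
  fixes A B C :: "'r \<Rightarrow> 'c \<Rightarrow> real"
  assumes gram: "\<And>i i' j j'. A i j * A i' j' + B i j * B i' j' + C i j * C i' j'
                          = A i j' * A i' j + B i j' * B i' j + C i j' * C i' j"
    and C0: "\<And>j. C i0 j = 0"
    and D: "A i0 j1 * B i0 j2 - A i0 j2 * B i0 j1 \<noteq> 0"
  shows "\<exists>t s u. (\<exists>i j. t * A i j + s * B i j + u * C i j \<noteq> 0) \<and>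
                 rows_proportional (\<lambda>i j. t * A i j + s * B i j + u * C i j)"
proof -
  define a where "a = A i0"
  define b where "b = B i0"
  have "a j * A i j' + b j * B i j' = a j' * A i j + b j' * B i j" for i j j'
    using gram[of i0 j i j'] C0 by (simp add: a_def b_def mult.commute)
  then obtain x y w where A: "\<And>i j. A i j = x i * a j + y i * b j"
    and B: "\<And>i j. B i j = y i * a j + w i * b j"
    using symmetric_coefficients_if_exchange[of a j1 b j2 A B] D unfolding a_def b_def by blast
  have minors: "C i j * C i' j' - C i j' * C i' j
      = (y i * (x i' - w i') - (x i - w i) * y i') * (a j * b j' - a j' * b j)" for i i' j j'
    using gram[of i j i' j'] unfolding A B by algebra
  consider "(\<exists>i j. C i j \<noteq> 0) \<and> rows_proportional C"
    | p q where "\<And>i j. C i j = p i * a j + q i * b j"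
      "\<And>i i'. p i * q i' - q i * p i' = y i * (x i' - w i') - (x i - w i) * y i'"
    using rows_proportional_or_in_span[where C = C and a = a and b = b,
        OF D[folded a_def b_def] minors] by blast
  then show ?thesis
  proof cases
    case 1
    then show ?thesis by (intro exI[of _ 0] exI[of _ 0] exI[of _ 1]) simp
  next
    case (2 p q)
    from rank_one_combination_if_equal_minors[where x = x and y = y and w = w and p = p and q = q,
        OF D[folded a_def b_def] 2(2)]
    obtain t s u where nz: "\<exists>j. t * a j + s * b j \<noteq> 0"
      and combination: "\<forall>i. \<exists>c. \<forall>j.
          (t * x i + s * y i + u * p i) * a j + (t * y i + s * w i + u * q i) * b j
            = c * (t * a j + s * b j)"
      by blast
    have "t * A i j + s * B i j + u * C i j
        = (t * x i + s * y i + u * p i) * a j + (t * y i + s * w i + u * q i) * b j" for i j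
      unfolding A B 2(1) by (simp add: algebra_simps)
    then have "rows_proportional (\<lambda>i j. t * A i j + s * B i j + u * C i j)"
      unfolding rows_proportional_def using combination
      by (intro exI[of _ "\<lambda>j. t * a j + s * b j"]) simp
    moreover obtain j where "t * A i0 j + s * B i0 j + u * C i0 j \<noteq> 0"
      using nz C0 by (auto simp: a_def b_def)
    ultimately show ?thesis by blast
  qed
qed

section \<open>Positive definite forms\<close>

locale posdef_form =
  fixes M :: "real^'d^'d"
  assumes symmetric: "x \<bullet> (M *v y) = y \<bullet> (M *v x)"
    and positive: "x \<noteq> 0 \<Longrightarrow> x \<bullet> (M *v x) > 0"
begin

definition form :: "real^'d \<Rightarrow> real^'d \<Rightarrow> real" where
  "form x y = x \<bullet> (M *v y)"

definition orthonormal :: "(real^'d) set \<Rightarrow> bool" where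
  "orthonormal E \<longleftrightarrow> (\<forall>e\<in>E. \<forall>e'\<in>E. form e e' = (if e = e' then 1 else 0))"

lemma form_commute: "form x y = form y x"
  by (simp add: form_def symmetric)

lemma form_add_left [simp]: "form (x + x') y = form x y + form x' y"
  and form_diff_left [simp]: "form (x - x') y = form x y - form x' y"
  and form_scaleR_left [simp]: "form (c *\<^sub>R x) y = c * form x y"
  and form_zero_left [simp]: "form 0 y = 0"
  by (simp_all add: form_def inner_add_left inner_diff_left)

lemma form_add_right [simp]: "form y (x + x') = form y x + form y x'"
  and form_diff_right [simp]: "form y (x - x') = form y x - form y x'"
  and form_scaleR_right [simp]: "form y (c *\<^sub>R x) = c * form y x"
  and form_zero_right [simp]: "form y 0 = 0"
  by (simp_all add: form_commute[of y])

lemma form_sum_right: "form x (\<Sum>e\<in>E. c e *\<^sub>R e) = (\<Sum>e\<in>E. c e * form x e)"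
  by (induction E rule: infinite_finite_induct) simp_all

lemma form_self_pos: "x \<noteq> 0 \<Longrightarrow> form x x > 0"
  by (simp add: form_def positive)

lemma form_eq_0_on_span:
  assumes "x \<in> span S" and "\<And>s. s \<in> S \<Longrightarrow> form s e = 0"
  shows "form x e = 0"
proof -
  have "linear (\<lambda>x. form x e)" by (intro linearI) simp_all
  then show ?thesis using linear_eq_0_on_span assms by blast
qed

lemma unit_multiple:
  assumes "x \<noteq> 0"
  obtains e c where "x = c *\<^sub>R e" "c \<noteq> 0" "form e e = 1"
proof -
  define c where "c = sqrt (form x x)"
  have "c > 0" using form_self_pos[OF assms] by (simp add: c_def)
  moreover have "c * c = form x x" using form_self_pos[OF assms] by (simp add: c_def)
  ultimately show ?thesis
    by (intro that[of c "(1 / c) *\<^sub>R x"]) auto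
qed

lemma orthonormal_independent:
  assumes "finite E" "orthonormal E"
  shows "independent E"
  unfolding independent_explicit
proof (intro conjI allI impI ballI)
  fix c v assume sum0: "(\<Sum>e\<in>E. c e *\<^sub>R e) = 0" and v: "v \<in> E"
  have "0 = form v (\<Sum>e\<in>E. c e *\<^sub>R e)" by (simp add: sum0)
  also have "\<dots> = (\<Sum>e\<in>E. c e * form v e)" by (rule form_sum_right)
  also have "\<dots> = c v"
    using assms v by (simp add: orthonormal_def if_distrib[of "(*) _"] sum.delta cong: if_cong)
  finally show "c v = 0" by simp
qed (fact assms)

lemma orthonormal_expansion:
  assumes "finite E" "orthonormal E" "span E = UNIV"
  shows "form x y = (\<Sum>e\<in>E. form x e * form y e)"
proof -
  obtain c where y: "y = (\<Sum>e\<in>E. c e *\<^sub>R e)"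
    using assms(1,3) span_finite[of E] by blast
  have coeff: "form y e' = c e'" if "e' \<in> E" for e'
    using assms(1,2) that
    by (simp add: y form_commute[of _ e'] form_sum_right orthonormal_def
        if_distrib[of "(*) _"] sum.delta' cong: if_cong)
  have "form x y = (\<Sum>e\<in>E. c e * form x e)" by (simp add: y form_sum_right)
  also have "\<dots> = (\<Sum>e\<in>E. form x e * form y e)" using coeff by (auto intro: sum.cong)
  finally show ?thesis .
qed

lemma orthonormal_spans:
  assumes "finite E" "orthonormal E" "card E = CARD('d)"
  shows "span E = UNIV"
  using card_ge_dim_independent[of E UNIV] orthonormal_independent[OF assms(1,2)] assms(3)
  by auto

lemma gram_schmidt_pair:
  assumes "independent {u, v}" "u \<noteq> v"
  obtains e1 e2 where "orthonormal {e1, e2}" "e1 \<noteq> e2" "u \<in> span {e1, e2}" "v \<in> span {e1, e2}"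
    "form u e1 * form v e2 - form v e1 * form u e2 \<noteq> 0"
proof -
  have "u \<noteq> 0" using assms(1) dependent_zero by blast
  then obtain e1 n1 where u: "u = n1 *\<^sub>R e1" and n1: "n1 \<noteq> 0" and e1: "form e1 e1 = 1"
    by (rule unit_multiple)
  define w where "w = v - form v e1 *\<^sub>R e1"
  have "independent (insert v {u})" using assms(1) by (simp add: insert_commute)
  then have "v \<notin> span {u}" using assms(2) by (simp add: independent_insert)
  have "w \<noteq> 0"
  proof
    assume "w = 0"
    then have "v = (form v e1 / n1) *\<^sub>R u" using n1 by (simp add: w_def u)
    then show False using \<open>v \<notin> span {u}\<close> by (metis span_base span_mul singletonI)
  qed
  then obtain e2 n2 where w: "w = n2 *\<^sub>R e2" and n2: "n2 \<noteq> 0" and e2: "form e2 e2 = 1"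
    by (rule unit_multiple)
  have "form e1 w = 0" using e1 by (simp add: w_def form_commute[of e1 v])
  then have "n2 * form e1 e2 = 0" by (simp add: w)
  then have e12: "form e1 e2 = 0" using n2 by simp
  have v: "v = form v e1 *\<^sub>R e1 + n2 *\<^sub>R e2" using w by (simp add: w_def algebra_simps)
  show ?thesis
  proof
    show "orthonormal {e1, e2}"
      using e1 e2 e12 by (auto simp: orthonormal_def form_commute[of e2 e1])
    show "e1 \<noteq> e2" using e1 e12 by auto
    show "u \<in> span {e1, e2}" by (subst u) (simp add: span_base span_mul)
    show "v \<in> span {e1, e2}" by (subst v) (simp add: span_base span_mul span_add)
    show "form u e1 * form v e2 - form v e1 * form u e2 \<noteq> 0"
    proof -
      have "form u e1 = n1" "form u e2 = 0" by (simp_all add: u e1 e12)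
      moreover have "form v e2 = n2" by (subst v) (simp add: e12 e2)
      ultimately show ?thesis using n1 n2 by simp
    qed
  qed
qed

lemma orthonormal_completion:
  assumes "CARD('d) = 3" "orthonormal {e1, e2}"
  obtains e3 where "orthonormal {e1, e2, e3}" "e3 \<notin> {e1, e2}"
proof -
  have "dim {M *v e1, M *v e2} \<le> card {M *v e1, M *v e2}"
    by (rule dim_le_card) (auto intro: span_base)
  also have "\<dots> < DIM(real^'d)" using assms(1) by (simp add: card_insert_if)
  finally obtain z where "z \<noteq> 0" and "\<And>y. y \<in> span {M *v e1, M *v e2} \<Longrightarrow> orthogonal z y"
    by (rule orthogonal_to_subspace_exists) blast
  then have z: "form z e1 = 0" "form z e2 = 0"
    by (simp_all add: form_def orthogonal_def span_base)
  obtain e3 c where "z = c *\<^sub>R e3" "c \<noteq> 0" and e3: "form e3 e3 = 1"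
    using \<open>z \<noteq> 0\<close> by (rule unit_multiple)
  with z have "form e3 e1 = 0" "form e3 e2 = 0" by simp_all
  moreover from this have "e3 \<noteq> e1" "e3 \<noteq> e2" using e3 by auto
  ultimately show ?thesis using e3 assms(2)
    by (intro that) (auto simp: orthonormal_def form_commute[of e1 e3] form_commute[of e2 e3])
qed

lemma orthonormal_frame:
  assumes "CARD('d) = 2 \<or> CARD('d) = 3" "independent {u, v}" "u \<noteq> v"
  obtains e1 e2 e3 where
    "\<And>x y. form x y = form x e1 * form y e1 + form x e2 * form y e2 + form x e3 * form y e3"
    "\<And>x. x \<in> span {u, v} \<Longrightarrow> form x e3 = 0"
    "form u e1 * form v e2 - form v e1 * form u e2 \<noteq> 0"
proof -
  obtain e1 e2 where E: "orthonormal {e1, e2}" "e1 \<noteq> e2"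
    and uv: "span {u, v} \<subseteq> span {e1, e2}"
    and det: "form u e1 * form v e2 - form v e1 * form u e2 \<noteq> 0"
    using gram_schmidt_pair[OF assms(2,3)]
    by (metis span_minimal subspace_span empty_subsetI insert_subset)
  show ?thesis
  proof (cases "CARD('d) = 2")
    case True
    then have "span {e1, e2} = UNIV" using E by (intro orthonormal_spans) auto
    then have "form x y = (\<Sum>e\<in>{e1, e2}. form x e * form y e)" for x y
      using E(1) by (intro orthonormal_expansion) auto
    also have "\<dots> x y = form x e1 * form y e1 + form x e2 * form y e2 + form x 0 * form y 0" for x y
      using E(2) by simp
    finally show ?thesis by (rule that[OF _ _ det]) simp
  next
    case False
    then obtain e3 where E3: "orthonormal {e1, e2, e3}" "e3 \<notin> {e1, e2}"
      using assms(1) E(1) orthonormal_completion by metis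
    then have "span {e1, e2, e3} = UNIV" using False assms(1) E(2) by (intro orthonormal_spans) auto
    then have "form x y = (\<Sum>e\<in>{e1, e2, e3}. form x e * form y e)" for x y
      using E3(1) by (intro orthonormal_expansion) auto
    also have "\<dots> x y = form x e1 * form y e1 + form x e2 * form y e2 + form x e3 * form y e3"
      for x y using E(2) E3(2) by (simp add: insert_commute[of e1 e2] eq_commute[of e3])
    finally have expansion:
      "\<And>x y. form x y = form x e1 * form y e1 + form x e2 * form y e2 + form x e3 * form y e3" .
    have "form x e3 = 0" if "x \<in> span {u, v}" for x
      using E3 uv that by (intro form_eq_0_on_span[of x "{e1, e2}"]) (auto simp: orthonormal_def)
    then show ?thesis by (rule that[OF expansion _ det])
  qed
qed

lemma rank_one_direction:
  fixes a :: "'r \<Rightarrow> 'c \<Rightarrow> real^'d"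
  assumes "CARD('d) = 2 \<or> CARD('d) = 3"
    and gram: "\<And>i i' j j'. form (a i j) (a i' j') = form (a i j') (a i' j)"
    and "dim (range (a i0)) = 2"
  shows "\<exists>y. (\<exists>i j. form (a i j) y \<noteq> 0) \<and> rows_proportional (\<lambda>i j. form (a i j) y)"
proof -
  obtain S where S: "S \<subseteq> range (a i0)" "independent S" "range (a i0) \<subseteq> span S" "card S = 2"
    using basis_exists[of "range (a i0)"] assms(3) by metis
  then obtain j1 j2 where S_eq: "S = {a i0 j1, a i0 j2}" and ne: "a i0 j1 \<noteq> a i0 j2"
    by (auto simp: card_2_iff)
  obtain e1 e2 e3 where
    expansion:
      "\<And>x y. form x y = form x e1 * form y e1 + form x e2 * form y e2 + form x e3 * form y e3"
    and e3: "\<And>x. x \<in> span S \<Longrightarrow> form x e3 = 0"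
    and det: "form (a i0 j1) e1 * form (a i0 j2) e2 - form (a i0 j2) e1 * form (a i0 j1) e2 \<noteq> 0"
    using orthonormal_frame[OF assms(1), of "a i0 j1" "a i0 j2"] S(2) ne unfolding S_eq by metis
  define A where "A i j = form (a i j) e1" for i j
  define B where "B i j = form (a i j) e2" for i j
  define C where "C i j = form (a i j) e3" for i j
  have coords: "form (a i j) (a i' j') = A i j * A i' j' + B i j * B i' j' + C i j * C i' j'"
    for i j i' j' unfolding A_def B_def C_def by (rule expansion)
  have "A i j * A i' j' + B i j * B i' j' + C i j * C i' j'
      = A i j' * A i' j + B i j' * B i' j + C i j' * C i' j" for i i' j j'
    using gram[of i j i' j'] unfolding coords .
  moreover have "C i0 j = 0" for j
    using S(3) by (auto simp: C_def intro: e3)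
  ultimately obtain t s u where "\<exists>i j. t * A i j + s * B i j + u * C i j \<noteq> 0"
    and "rows_proportional (\<lambda>i j. t * A i j + s * B i j + u * C i j)"
    using rank_one_combination_if_gram_symmetric[where A = A and B = B and C = C, of i0 j1 j2] det
    unfolding A_def B_def by blast
  moreover have "form (a i j) (t *\<^sub>R e1 + s *\<^sub>R e2 + u *\<^sub>R e3) = t * A i j + s * B i j + u * C i j"
    for i j by (simp add: A_def B_def C_def)
  ultimately show ?thesis by (intro exI[of _ "t *\<^sub>R e1 + s *\<^sub>R e2 + u *\<^sub>R e3"]) simp
qed

lemma rank_one_in_range:
  fixes a :: "'m::finite \<Rightarrow> 'n::finite \<Rightarrow> real^'d"
  assumes "CARD('d) = 2 \<or> CARD('d) = 3"
    and gram: "\<And>i i' j j'. form (a i j) (a i' j') = form (a i j') (a i' j)"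
    and "(\<exists>i0. dim (range (a i0)) = 2) \<or> (\<exists>j0. dim (range (\<lambda>l. a l j0)) = 2)"
  shows "\<exists>z. PK a z \<noteq> 0 \<and> rank (PK a z) \<le> 1"
proof -
  have PK: "PK a (M *v y) $ i $ j = form (a i j) y" for y i j
    by (simp add: PK_def form_def)
  from assms(3) show ?thesis
  proof
    assume "\<exists>i0. dim (range (a i0)) = 2"
    then obtain y where "\<exists>i j. form (a i j) y \<noteq> 0"
      and rows: "rows_proportional (\<lambda>i j. form (a i j) y)"
      using rank_one_direction[where a = a, OF assms(1) gram] by blast
    then have "PK a (M *v y) \<noteq> 0" by (auto simp: PK vec_eq_iff)
    moreover have "rank (PK a (M *v y)) \<le> 1"
      using rows by (intro rank_le_1_if_rows_proportional) (simp add: PK)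
    ultimately show ?thesis by blast
  next
    assume "\<exists>j0. dim (range (\<lambda>l. a l j0)) = 2"
    moreover have "form (a i j) (a i' j') = form (a i' j) (a i j')" for i i' j j'
      using gram form_commute by metis
    ultimately obtain y where "\<exists>j i. form (a i j) y \<noteq> 0"
      and columns: "rows_proportional (\<lambda>j i. form (a i j) y)"
      using rank_one_direction[where a = "\<lambda>j i. a i j", OF assms(1)] by blast
    then have "PK a (M *v y) \<noteq> 0" by (auto simp: PK vec_eq_iff)
    moreover have "rank (transpose (PK a (M *v y))) \<le> 1"
      using columns by (intro rank_le_1_if_rows_proportional) (simp add: PK transpose_def)
    ultimately show ?thesis by (auto simp: rank_transpose)
  qed
qed

end

lemma inner_symmetrization:
  fixes \<Lambda> :: "real^'d^'d"
  shows "x \<bullet> ((\<Lambda> + transpose \<Lambda>) *v y) = x \<bullet> (\<Lambda> *v y) + y \<bullet> (\<Lambda> *v x)"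
  by (simp add: matrix_vector_mult_add_rdistrib inner_add_right)
    (metis dot_lmul_matrix inner_commute)

lemma posdef_form_symmetrization:
  fixes \<Lambda> :: "real^'d^'d"
  assumes "\<And>x. x \<noteq> 0 \<Longrightarrow> x \<bullet> (\<Lambda> *v x) > 0"
  shows "posdef_form (\<Lambda> + transpose \<Lambda>)"
  using assms by unfold_locales (simp_all add: inner_symmetrization)

section \<open>A theorem of the alternative for quadratic forms\<close>

definition outer :: "real^'d \<Rightarrow> real^'d \<Rightarrow> real^'d^'d" where
  "outer u w = (\<chi> \<alpha> \<beta>. u $ \<alpha> * w $ \<beta>)"

lemma inner_outer: "L \<bullet> outer u w = u \<bullet> (L *v w)"
  by (simp add: outer_def inner_vec_def matrix_vector_mult_def sum_distrib_left
      mult.assoc mult.left_commute)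

lemma outer_inner_outer: "outer u w \<bullet> outer z z = (u \<bullet> z) * (w \<bullet> z)"
proof -
  have "outer u w \<bullet> outer z z = (\<Sum>\<alpha>\<in>UNIV. \<Sum>\<beta>\<in>UNIV. (u $ \<alpha> * z $ \<alpha>) * (w $ \<beta> * z $ \<beta>))"
    by (simp add: inner_outer inner_vec_def matrix_vector_mult_def outer_def sum_distrib_left
        mult.assoc mult.left_commute)
  then show ?thesis by (simp add: inner_vec_def sum_product)
qed

lemma trace_outer_self: "(\<Sum>\<alpha>\<in>UNIV. outer v v $ \<alpha> $ \<alpha>) = v \<bullet> v"
  by (simp add: outer_def inner_vec_def)

lemma convex_hull_unit_outer_psd:
  fixes x :: "real^'d^'d"
  assumes "x \<in> convex hull ((\<lambda>v. outer v v) ` sphere 0 1)"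
  shows "\<forall>z. 0 \<le> x \<bullet> outer z z" and "(\<Sum>\<alpha>\<in>UNIV. x $ \<alpha> $ \<alpha>) = 1"
proof -
  define P :: "(real^'d^'d) set" where "P = {x. (\<forall>z. 0 \<le> x \<bullet> outer z z) \<and> (\<Sum>\<alpha>\<in>UNIV. x $ \<alpha> $ \<alpha>) = 1}"
  have "convex P"
    unfolding convex_def P_def
    by (auto simp: inner_add_left sum.distrib sum_distrib_left[symmetric] add_nonneg_nonneg)
  moreover have "(\<lambda>v. outer v v) ` sphere 0 1 \<subseteq> P"
    by (auto simp: P_def outer_inner_outer trace_outer_self power2_norm_eq_inner[symmetric])
  ultimately have "x \<in> P" using assms hull_minimal[of _ P convex] by blast
  then show "\<forall>z. 0 \<le> x \<bullet> outer z z" "(\<Sum>\<alpha>\<in>UNIV. x $ \<alpha> $ \<alpha>) = 1"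
    by (simp_all add: P_def)
qed

lemma exists_outer_self_ne_0:
  fixes x :: "real^'d^'d"
  assumes "(\<Sum>\<alpha>\<in>UNIV. x $ \<alpha> $ \<alpha>) \<noteq> 0"
  shows "\<exists>z. x \<bullet> outer z z \<noteq> 0"
proof -
  have "x \<bullet> outer (axis \<alpha> 1) (axis \<alpha> 1) = x $ \<alpha> $ \<alpha>" for \<alpha>
    by (simp add: inner_outer matrix_vector_mult_basis column_def inner_axis')
  then show ?thesis using assms by (metis (no_types) sum.neutral)
qed

lemma span_image_eq_range_sum:
  fixes S :: "'q \<Rightarrow> 'v::real_vector"
  assumes "finite I"
  shows "span (S ` I) = range (\<lambda>\<beta>. \<Sum>q\<in>I. \<beta> q *\<^sub>R S q)"
proof
  show "range (\<lambda>\<beta>. \<Sum>q\<in>I. \<beta> q *\<^sub>R S q) \<subseteq> span (S ` I)"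
    by (auto intro: span_sum span_mul span_base)
  have "S q \<in> range (\<lambda>\<beta>. \<Sum>q\<in>I. \<beta> q *\<^sub>R S q)" if "q \<in> I" for q
    using assms that
    by (intro range_eqI[of _ _ "\<lambda>q'. if q' = q then 1 else 0"])
      (simp add: if_distrib[of "\<lambda>c. c *\<^sub>R _"] sum.delta' cong: if_cong)
  moreover have "subspace (range (\<lambda>\<beta>. \<Sum>q\<in>I. \<beta> q *\<^sub>R S q))"
    unfolding subspace_def
  proof (intro conjI ballI allI)
    show "0 \<in> range (\<lambda>\<beta>. \<Sum>q\<in>I. \<beta> q *\<^sub>R S q)"
      by (rule range_eqI[of _ _ "\<lambda>_. 0"]) simp
    fix x y :: 'v and c :: real
    assume "x \<in> range (\<lambda>\<beta>. \<Sum>q\<in>I. \<beta> q *\<^sub>R S q)" "y \<in> range (\<lambda>\<beta>. \<Sum>q\<in>I. \<beta> q *\<^sub>R S q)"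
    then obtain \<beta> \<gamma> where x: "x = (\<Sum>q\<in>I. \<beta> q *\<^sub>R S q)" and y: "y = (\<Sum>q\<in>I. \<gamma> q *\<^sub>R S q)"
      by blast
    show "x + y \<in> range (\<lambda>\<beta>. \<Sum>q\<in>I. \<beta> q *\<^sub>R S q)"
      by (rule range_eqI[of _ _ "\<lambda>q. \<beta> q + \<gamma> q"]) (simp add: x y sum.distrib scaleR_add_left)
    show "c *\<^sub>R x \<in> range (\<lambda>\<beta>. \<Sum>q\<in>I. \<beta> q *\<^sub>R S q)"
      by (rule range_eqI[of _ _ "\<lambda>q. c * \<beta> q"]) (simp add: x scaleR_sum_right)
  qed
  ultimately show "span (S ` I) \<subseteq> range (\<lambda>\<beta>. \<Sum>q\<in>I. \<beta> q *\<^sub>R S q)"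
    by (intro span_minimal) auto
qed

lemma inner_eq_0_if_bounded_on_subspace:
  assumes "subspace L" "\<And>x. x \<in> L \<Longrightarrow> f \<bullet> x < b" "x \<in> L"
  shows "f \<bullet> x = 0"
proof (rule ccontr)
  assume "f \<bullet> x \<noteq> 0"
  then have "f \<bullet> (((b + \<bar>b\<bar> + 1) / (f \<bullet> x)) *\<^sub>R x) = b + \<bar>b\<bar> + 1" by simp
  moreover have "((b + \<bar>b\<bar> + 1) / (f \<bullet> x)) *\<^sub>R x \<in> L"
    using assms(1,3) by (simp add: subspace_scale)
  ultimately show False using assms(2) by fastforce
qed

lemma posdef_if_pos_on_sphere:
  fixes \<Lambda> :: "real^'d^'d"
  assumes "\<And>v. norm v = 1 \<Longrightarrow> v \<bullet> (\<Lambda> *v v) > 0" and "x \<noteq> 0"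
  shows "x \<bullet> (\<Lambda> *v x) > 0"
proof -
  define v where "v = (1 / norm x) *\<^sub>R x"
  have "x = norm x *\<^sub>R v" using assms(2) by (simp add: v_def)
  then have "x \<bullet> (\<Lambda> *v x) = (norm x)\<^sup>2 * (v \<bullet> (\<Lambda> *v v))"
    by (metis inner_scaleR_left inner_scaleR_right matrix_vector_mult_scaleR
        power2_eq_square mult.assoc)
  moreover have "norm v = 1" using assms(2) by (simp add: v_def)
  ultimately show ?thesis using assms by simp
qed

(* Separate the span of the S q from the compact convex hull of the unit rank-one matrices. *)

lemma psd_combination_or_posdef_annihilator:
  fixes S :: "'q \<Rightarrow> real^'d^'d"
  assumes "finite I"
  obtains \<beta> where "\<forall>z. 0 \<le> (\<Sum>q\<in>I. \<beta> q *\<^sub>R S q) \<bullet> outer z z"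
      "\<exists>z. (\<Sum>q\<in>I. \<beta> q *\<^sub>R S q) \<bullet> outer z z \<noteq> 0"
  | \<Lambda> where "\<forall>q\<in>I. \<Lambda> \<bullet> S q = 0" "\<And>x. x \<noteq> 0 \<Longrightarrow> x \<bullet> (\<Lambda> *v x) > 0"
proof -
  define T where "T = convex hull ((\<lambda>v. outer v v) ` sphere (0::real^'d) 1)"
  show ?thesis
  proof (cases "span (S ` I) \<inter> T = {}")
    case False
    then obtain \<beta> where "(\<Sum>q\<in>I. \<beta> q *\<^sub>R S q) \<in> T"
      using span_image_eq_range_sum[OF assms, of S] by auto
    then have psd: "\<forall>z. 0 \<le> (\<Sum>q\<in>I. \<beta> q *\<^sub>R S q) \<bullet> outer z z"
      and trace: "(\<Sum>\<alpha>\<in>UNIV. (\<Sum>q\<in>I. \<beta> q *\<^sub>R S q) $ \<alpha> $ \<alpha>) = 1"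
      unfolding T_def by (rule convex_hull_unit_outer_psd)+
    show ?thesis by (rule that(1)[OF psd exists_outer_self_ne_0]) (use trace in simp)
  next
    case True
    have "compact T" unfolding T_def outer_def
      by (intro compact_convex_hull compact_continuous_image compact_sphere continuous_intros)
    moreover have "T \<noteq> {}"
      using vector_choose_size[of 1] unfolding T_def by (auto intro: hull_inc)
    ultimately obtain \<Lambda> b
      where sub: "\<forall>x\<in>span (S ` I). \<Lambda> \<bullet> x < b" and sup: "\<forall>x\<in>T. \<Lambda> \<bullet> x > b"
      using separating_hyperplane_closed_compact[of "span (S ` I)" T] True
      unfolding T_def by (auto simp: subspace_imp_convex)
    have "\<Lambda> \<bullet> S q = 0" if "q \<in> I" for q
      using sub that
      by (intro inner_eq_0_if_bounded_on_subspace[of "span (S ` I)"]) (auto intro: span_base)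
    moreover have "b > 0" using sub span_zero by fastforce
    then have "v \<bullet> (\<Lambda> *v v) > 0" if "norm v = 1" for v
      using sup that unfolding T_def by (force simp: inner_outer intro: hull_inc)
    ultimately show ?thesis using that(2) posdef_if_pos_on_sphere by blast
  qed
qed

section \<open>Quadratic forms of the minors\<close>

lemma exchange_from_ordered:
  fixes g :: "'v \<Rightarrow> 'v \<Rightarrow> 'b" and a :: "'m::linorder \<Rightarrow> 'n::linorder \<Rightarrow> 'v"
  assumes sym: "\<And>x y. g x y = g y x"
    and ordered: "\<And>i1 i2 j1 j2. i1 < i2 \<Longrightarrow> j1 < j2 \<Longrightarrow> g (a i1 j1) (a i2 j2) = g (a i1 j2) (a i2 j1)"
  shows "g (a i j) (a i' j') = g (a i j') (a i' j)"
proof (cases "i = i' \<or> j = j'")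
  case True
  then show ?thesis using sym by auto
next
  case False
  then show ?thesis using ordered sym by (metis linorder_neqE)
qed

definition minor_form_matrix ::
    "('m \<Rightarrow> 'n \<Rightarrow> real^'d) \<Rightarrow> ('m \<times> 'm \<times> 'n \<times> 'n) \<Rightarrow> real^'d^'d" where
  "minor_form_matrix a q = (case q of (i1, i2, j1, j2) \<Rightarrow>
     outer (a i1 j1) (a i2 j2) + outer (a i2 j2) (a i1 j1)
       - outer (a i1 j2) (a i2 j1) - outer (a i2 j1) (a i1 j2))"

lemma minor_form_matrix_outer:
  fixes a :: "'m::finite \<Rightarrow> 'n::finite \<Rightarrow> real^'d"
  shows "minor_form_matrix a q \<bullet> outer z z = 2 * minor2 (PK a z) q"
  by (cases q)
    (simp add: minor_form_matrix_def minor2_def PK_def inner_diff_left inner_add_left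
      outer_inner_outer)

lemma inner_minor_form_matrix:
  fixes \<Lambda> :: "real^'d^'d" and a :: "'m \<Rightarrow> 'n \<Rightarrow> real^'d"
  shows "\<Lambda> \<bullet> minor_form_matrix a (i1, i2, j1, j2)
     = a i1 j1 \<bullet> ((\<Lambda> + transpose \<Lambda>) *v a i2 j2) - a i1 j2 \<bullet> ((\<Lambda> + transpose \<Lambda>) *v a i2 j1)"
  by (simp add: minor_form_matrix_def inner_outer inner_add_right inner_diff_right
      inner_symmetrization)

lemma minor_combination_if_psd:
  fixes a :: "'m::{finite,linorder} \<Rightarrow> 'n::{finite,linorder} \<Rightarrow> real^'d"
  assumes psd: "\<forall>z. 0 \<le> (\<Sum>q\<in>minor_idx. \<beta> q *\<^sub>R minor_form_matrix a q) \<bullet> outer z z"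
    and nz: "\<exists>z. (\<Sum>q\<in>minor_idx. \<beta> q *\<^sub>R minor_form_matrix a q) \<bullet> outer z z \<noteq> 0"
  shows "\<exists>\<beta>'. (\<exists>q\<in>minor_idx. \<beta>' q \<noteq> 0) \<and>
           (\<forall>X\<in>range (PK a). (\<Sum>q\<in>minor_idx. \<beta>' q * minor2 X q) \<ge> 0) \<and>
           (\<exists>X\<in>range (PK a). (\<Sum>q\<in>minor_idx. \<beta>' q * minor2 X q) \<noteq> 0)"
proof -
  have eq: "(\<Sum>q\<in>minor_idx. \<beta> q *\<^sub>R minor_form_matrix a q) \<bullet> outer z z
      = (\<Sum>q\<in>minor_idx. 2 * \<beta> q * minor2 (PK a z) q)" for z
    by (simp add: inner_sum_left minor_form_matrix_outer mult_ac)
  obtain z where "(\<Sum>q\<in>minor_idx. 2 * \<beta> q * minor2 (PK a z) q) \<noteq> 0"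
    using nz by (auto simp: eq)
  moreover from this have "\<exists>q\<in>minor_idx. 2 * \<beta> q \<noteq> 0"
    by (metis (no_types, lifting) mult_eq_0_iff sum.neutral)
  ultimately show ?thesis
    using psd by (intro exI[of _ "\<lambda>q. 2 * \<beta> q"]) (auto simp: eq)
qed

lemma has_rank1_connections_if_posdef_annihilator:
  fixes a :: "'m::{finite,linorder} \<Rightarrow> 'n::{finite,linorder} \<Rightarrow> real^'d" and \<Lambda> :: "real^'d^'d"
  assumes d: "CARD('d) = 2 \<or> CARD('d) = 3"
    and span2: "(\<exists>i0. dim (range (a i0)) = 2) \<or> (\<exists>j0. dim (range (\<lambda>l. a l j0)) = 2)"
    and annihilates: "\<forall>q\<in>minor_idx. \<Lambda> \<bullet> minor_form_matrix a q = 0"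
    and posdef: "\<And>x. x \<noteq> 0 \<Longrightarrow> x \<bullet> (\<Lambda> *v x) > 0"
  shows "has_rank1_connections (range (PK a))"
proof -
  interpret posdef_form "\<Lambda> + transpose \<Lambda>"
    using posdef by (rule posdef_form_symmetrization)
  have "form (a i1 j1) (a i2 j2) = form (a i1 j2) (a i2 j1)" if "i1 < i2" "j1 < j2" for i1 i2 j1 j2
    using annihilates[rule_format, of "(i1, i2, j1, j2)"] that
    by (simp add: minor_idx_def inner_minor_form_matrix form_def)
  then have "form (a i j) (a i' j') = form (a i j') (a i' j)" for i i' j j'
    by (rule exchange_from_ordered[of form, OF form_commute])
  then obtain z where z: "PK a z \<noteq> 0" "rank (PK a z) \<le> 1"
    using rank_one_in_range[OF d _ span2] by blast
  have "PK a 0 = 0" by (simp add: PK_def vec_eq_iff)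
  moreover have "rank (PK a z - 0) = 1" using z rank_eq_0[of "PK a z"] by simp
  ultimately show ?thesis
    using z(1) unfolding has_rank1_connections_def by (metis rangeI)
qed

theorem lemma6:
  fixes a :: "'m::{finite,linorder} \<Rightarrow> 'n::{finite,linorder} \<Rightarrow> real^'d"
    and K :: "(real^('n::{finite,linorder})^('m::{finite,linorder})) set"
  assumes d: "CARD('d) = 2 \<or> CARD('d) = 3"
    and sub: "subspace K" and dimK: "dim K = CARD('d)"
    and K_def: "K = range (PK a)"
    and lin: "linear (PK a)" and inj: "inj (PK a)"
    and norank1: "\<not> has_rank1_connections K"
    and span2: "(\<exists>i0. dim (range (a i0)) = 2) \<or> (\<exists>j0. dim (range (\<lambda>l. a l j0)) = 2)"
  shows "\<exists>\<beta> :: ('m \<times> 'm \<times> 'n \<times> 'n) \<Rightarrow> real.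
           (\<exists>q\<in>minor_idx. \<beta> q \<noteq> 0) \<and>
           (\<forall>X\<in>K. (\<Sum>q\<in>minor_idx. \<beta> q * minor2 X q) \<ge> 0) \<and>
           (\<exists>X\<in>K. (\<Sum>q\<in>minor_idx. \<beta> q * minor2 X q) \<noteq> 0)"
proof -
  have "finite (minor_idx :: ('m \<times> 'm \<times> 'n \<times> 'n) set)" by simp
  then show ?thesis
  proof (rule psd_combination_or_posdef_annihilator[where S = "minor_form_matrix a"])
    fix \<beta>
    assume "\<forall>z. 0 \<le> (\<Sum>q\<in>minor_idx. \<beta> q *\<^sub>R minor_form_matrix a q) \<bullet> outer z z"
      and "\<exists>z. (\<Sum>q\<in>minor_idx. \<beta> q *\<^sub>R minor_form_matrix a q) \<bullet> outer z z \<noteq> 0"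
    then show ?thesis using minor_combination_if_psd K_def by blast
  next
    fix \<Lambda> :: "real^'d^'d"
    assume "\<forall>q\<in>minor_idx. \<Lambda> \<bullet> minor_form_matrix a q = 0"
      and "\<And>x. x \<noteq> 0 \<Longrightarrow> x \<bullet> (\<Lambda> *v x) > 0"
    then have "has_rank1_connections K"
      unfolding K_def by (rule has_rank1_connections_if_posdef_annihilator[OF d span2])
    with norank1 show ?thesis by contradiction
  qed
qed

end
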